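(* For $k=1,\dots,N-1$: (1) $Z^jV_k=V_{k+j}$ for $j=1,\dots,N-k-1$; moreover $Z^kV=\bigoplus_{j=k+1}^{N}V_j$ and $V=\bigoplus_{j=0}^{N-1}Z^jV_1$; (2) $Z_k$ maps $|Z|_kV$ onto $V_{k+1}$ and $Z_k^*$ maps $V_{k+1}$ onto $|Z|_kV$, and both maps are isometric isomorphisms.
   Context: Fix integers $N\ge 2$ and $n_1\ge n_2\ge\dots\ge n_N\ge 1$. Let $\mathcal H$ be a finite-dimensional complex Hilbert space with orthonormal basis $\{|-\rangle,|+\rangle\}\cup\{|a_k\rangle:1\le k\le N,\ 0\le a\le n_k-1\}$. For vectors $x,y$, $|x\rangle\langle y|$ denotes the operator $u\mapsto\langle y,u\rangle x$. Put $E_k=\mathrm{span}\{|a_k\rangle:0\le a\le n_k-1\}$, $P_k$ the orthogonal projection onto $E_k$, $\zeta_k=e^{2\pi i/n_k}$, and $\varphi_{a_k}=n_k^{-1/2}\sum_{b=0}^{n_k-1}\zeta_k^{-ba}|b_k\rangle$ for $0\le a\le n_k-1$. For $1\le k\le N-1$ let $Z_k=n_k^{-1/2}\sum_{b=0}^{n_{k+1}-1}\sum_{a=0}^{n_k-1}\zeta_k^{ba}|b_{k+1}\rangle\langle a_k|$ (an operator on $\mathcal H$), $|Z|_k=Z_k^*Z_k$, and $Z=\sum_{k=1}^{N-1}Z_k$. $V$ is the orthogonal complement of the set $\{|-\rangle,|+\rangle,Z^n\varphi_{0_1},Z^{*n}\varphi_{0_N},Z^{*s}\varphi_{0_{2m+1}}:0\le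 n\le N-1,\ 1\le m\le (N-1)/2,\ 1\le s\le 2m\}$, and $V_k=P_kV$ for $k=1,\dots,N$. *)

theory Defs
  imports Complex_Main
begin

(* Orthonormal basis labels: Mn = |->, Pl = |+>, Bs a k = |a_k> *)
datatype bidx = Mn | Pl | Bs nat nat

type_synonym hvec = "bidx \<Rightarrow> complex"
type_synonym hmat = "bidx \<Rightarrow> bidx \<Rightarrow> complex"

definition Idx :: "nat \<Rightarrow> (nat \<Rightarrow> nat) \<Rightarrow> bidx set" where
  "Idx N n = {Mn, Pl} \<union> {Bs a k | a k. 1 \<le> k \<and> k \<le> N \<and> a < n k}"

definition Hsp :: "nat \<Rightarrow> (nat \<Rightarrow> nat) \<Rightarrow> hvec set" where
  "Hsp N n = {x. \<forall>i. i \<notin> Idx N n \<longrightarrow> x i = 0}"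

definition hinner :: "nat \<Rightarrow> (nat \<Rightarrow> nat) \<Rightarrow> hvec \<Rightarrow> hvec \<Rightarrow> complex" where
  "hinner N n x y = (\<Sum>i\<in>Idx N n. cnj (x i) * y i)"

definition hnorm :: "nat \<Rightarrow> (nat \<Rightarrow> nat) \<Rightarrow> hvec \<Rightarrow> real" where
  "hnorm N n x = sqrt (Re (hinner N n x x))"

definition ket :: "bidx \<Rightarrow> hvec" where
  "ket i = (\<lambda>j. if j = i then 1 else 0)"

(* matrix of the operator |x><y| : u \<mapsto> <y,u> x *)
definition ketbra :: "hvec \<Rightarrow> hvec \<Rightarrow> hmat" where
  "ketbra x y = (\<lambda>i j. x i * cnj (y j))"

definition mapply :: "nat \<Rightarrow> (nat \<Rightarrow> nat) \<Rightarrow> hmat \<Rightarrow> hvec \<Rightarrow> hvec" where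
  "mapply N n M x = (\<lambda>i. \<Sum>j\<in>Idx N n. M i j * x j)"

definition adj :: "hmat \<Rightarrow> hmat" where
  "adj M = (\<lambda>i j. cnj (M j i))"

definition mmult :: "nat \<Rightarrow> (nat \<Rightarrow> nat) \<Rightarrow> hmat \<Rightarrow> hmat \<Rightarrow> hmat" where
  "mmult N n A B = (\<lambda>i j. \<Sum>l\<in>Idx N n. A i l * B l j)"

definition zeta :: "(nat \<Rightarrow> nat) \<Rightarrow> nat \<Rightarrow> complex" where
  "zeta n k = cis (2 * pi / real (n k))"

definition phi :: "(nat \<Rightarrow> nat) \<Rightarrow> nat \<Rightarrow> nat \<Rightarrow> hvec" where
  "phi n a k = (\<lambda>i. \<Sum>b<n k. complex_of_real (1 / sqrt (real (n k)))
                        * inverse (zeta n k ^ (b * a)) * ket (Bs b k) i)"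

definition Zk :: "(nat \<Rightarrow> nat) \<Rightarrow> nat \<Rightarrow> hmat" where
  "Zk n k = (\<lambda>i j. \<Sum>b<n (Suc k). \<Sum>a<n k. complex_of_real (1 / sqrt (real (n k)))
               * zeta n k ^ (b * a) * ketbra (ket (Bs b (Suc k))) (ket (Bs a k)) i j)"

definition absZ :: "nat \<Rightarrow> (nat \<Rightarrow> nat) \<Rightarrow> nat \<Rightarrow> hmat" where
  "absZ N n k = mmult N n (adj (Zk n k)) (Zk n k)"

definition Zop :: "nat \<Rightarrow> (nat \<Rightarrow> nat) \<Rightarrow> hmat" where
  "Zop N n = (\<lambda>i j. \<Sum>k\<in>{1..N-1}. Zk n k i j)"

definition Zpow :: "nat \<Rightarrow> (nat \<Rightarrow> nat) \<Rightarrow> nat \<Rightarrow> hvec \<Rightarrow> hvec" where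
  "Zpow N n m = (mapply N n (Zop N n)) ^^ m"

definition Zadjpow :: "nat \<Rightarrow> (nat \<Rightarrow> nat) \<Rightarrow> nat \<Rightarrow> hvec \<Rightarrow> hvec" where
  "Zadjpow N n m = (mapply N n (adj (Zop N n))) ^^ m"

definition Sset :: "nat \<Rightarrow> (nat \<Rightarrow> nat) \<Rightarrow> hvec set" where
  "Sset N n = {ket Mn, ket Pl}
     \<union> {Zpow N n m (phi n 0 1) | m. m \<le> N - 1}
     \<union> {Zadjpow N n m (phi n 0 N) | m. m \<le> N - 1}
     \<union> {Zadjpow N n s (phi n 0 (2 * m + 1)) | m s. 1 \<le> m \<and> 2 * m \<le> N - 1 \<and> 1 \<le> s \<and> s \<le> 2 * m}"

definition Vsp :: "nat \<Rightarrow> (nat \<Rightarrow> nat) \<Rightarrow> hvec set" where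
  "Vsp N n = {x \<in> Hsp N n. \<forall>s\<in>Sset N n. hinner N n s x = 0}"

definition Proj :: "nat \<Rightarrow> hvec \<Rightarrow> hvec" where
  "Proj k x = (\<lambda>i. case i of Bs a k' \<Rightarrow> (if k' = k then x i else 0) | _ \<Rightarrow> 0)"

definition Vk :: "nat \<Rightarrow> (nat \<Rightarrow> nat) \<Rightarrow> nat \<Rightarrow> hvec set" where
  "Vk N n k = Proj k ` Vsp N n"

definition is_direct_sum :: "hvec set \<Rightarrow> (nat \<Rightarrow> hvec set) \<Rightarrow> nat set \<Rightarrow> bool" where
  "is_direct_sum W A J \<longleftrightarrow>
     W = {(\<lambda>i. \<Sum>j\<in>J. f j i) | f. \<forall>j\<in>J. f j \<in> A j} \<and>
     (\<forall>f. (\<forall>j\<in>J. f j \<in> A j) \<and> (\<lambda>i. \<Sum>j\<in>J. f j i) = (\<lambda>i. 0) \<longrightarrow> (\<forall>j\<in>J. f j = (\<lambda>i. 0)))"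

end

theory Submission
  imports Defs
begin

text \<open>The vectors spanning \<open>V\<^sup>\<bottom>\<close> other than \<open>|\<plusminus>\<rangle>\<close> each lie in a single \<open>E\<^sub>k\<close>,
  so \<open>V\<close> is invariant under every \<open>P\<^sub>k\<close> and \<open>V\<^sub>k = V \<inter> E\<^sub>k\<close>. Applying \<open>Z\<close> or \<open>Z\<^sup>*\<close> to
  one of these vectors gives \<open>0\<close>, another of them, or a nonzero multiple of one of them
  (the orbit \<open>Z\<^sup>m\<phi>\<^bsub>0_1\<^esub>\<close> alternates between multiples of \<open>\<phi>\<^bsub>0_m+1\<^esub>\<close> and \<open>|0\<^bsub>m+1\<^esub>\<rangle>\<close>);
  hence \<open>V\<close> is invariant under \<open>Z\<close> and \<open>Z\<^sup>*\<close>. On \<open>E\<^sub>k\<close> the operator \<open>Z\<close> acts as \<open>Z\<^sub>k\<close>, and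
  \<open>n\<^bsub>k+1\<^esub> \<le> n\<^sub>k\<close> makes \<open>Z\<^sub>k Z\<^sub>k\<^sup>* = P\<^bsub>k+1\<^esub>\<close>. So \<open>Z\<^sub>k\<close> maps \<open>V\<^sub>k\<close> onto \<open>V\<^bsub>k+1\<^esub>\<close> with the
  isometric right inverse \<open>Z\<^sub>k\<^sup>*\<close>, and the direct sums come from the independence of the
  \<open>E\<^sub>j\<close>.\<close>

section \<open>Discrete Fourier matrices\<close>

lemma sum_cis_roots_orthogonal:
  assumes b: "b < m" and b': "b' < m"
  shows "(\<Sum>a<m. cis (2*pi/m)^(b*a) * cnj (cis (2*pi/m)^(b'*a))) = (if b = b' then of_nat m else 0)"
proof -
  have m: "m > 0" using b by simp
  define z where "z = cis (2*pi/m)"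
  define w where "w = z^b * cnj z ^ b'"
  have zm: "z ^ m = 1" using m by (simp add: z_def DeMoivre)
  have cz: "cnj z * z = 1" by (simp add: z_def cis_cnj cis_mult)
  have czm: "cnj z ^ m = 1" using zm by (metis complex_cnj_one complex_cnj_power)
  have "cis (2*pi/m)^(b*a) * cnj (cis (2*pi/m)^(b'*a)) = w ^ a" for a
    by (simp add: w_def z_def power_mult power_mult_distrib)
  then have sum_eq: "(\<Sum>a<m. cis (2*pi/m)^(b*a) * cnj (cis (2*pi/m)^(b'*a))) = (\<Sum>a<m. w^a)"
    by simp
  have wm: "w ^ m = 1"
    by (simp add: w_def power_mult_distrib flip: power_mult) (simp add: power_mult mult.commute[of _ m] zm czm)
  show ?thesis
  proof (cases "b = b'")
    case True
    then have "w = 1" by (simp add: w_def flip: power_mult_distrib) (simp add: mult.commute[of z] cz)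
    then show ?thesis using True sum_eq by simp
  next
    case False
    have "w \<noteq> 1"
    proof
      assume "w = 1"
      then have "z^b * cnj z ^ b' * z ^ b' = z ^ b'" by (simp add: w_def)
      then have "z^b = z^b'" by (simp add: mult.assoc flip: power_mult_distrib add: cz)
      then have "cis (2 * pi * real b / real m) = cis (2 * pi * real b' / real m)"
        by (simp add: z_def DeMoivre mult.commute)
      moreover have "inj_on (\<lambda>k. cis (2 * pi * real k / real m)) {..<m}"
        using bij_betw_roots_unity[OF m] by (simp add: bij_betw_def)
      ultimately show False using b b' False by (auto dest: inj_onD)
    qed
    then show ?thesis using False sum_eq by (simp add: sum_gp_strict wm)
  qed
qed

definition inv_sqrt :: "(nat \<Rightarrow> nat) \<Rightarrow> nat \<Rightarrow> complex" where
  "inv_sqrt n k = complex_of_real (1 / sqrt (real (n k)))"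

lemma cnj_inv_sqrt [simp]: "cnj (inv_sqrt n k) = inv_sqrt n k"
  by (simp add: inv_sqrt_def)

lemma inv_sqrt_square:
  assumes "n k > 0"
  shows "inv_sqrt n k * inv_sqrt n k * of_nat (n k) = 1"
proof -
  have "(1 / sqrt (real (n k))) * (1 / sqrt (real (n k))) * real (n k) = 1"
    using assms by (simp add: field_simps)
  then show ?thesis
    unfolding inv_sqrt_def by (metis of_real_1 of_real_mult of_real_of_nat_eq)
qed

lemma inv_sqrt_nonzero: "n k > 0 \<Longrightarrow> inv_sqrt n k \<noteq> 0"
  by (simp add: inv_sqrt_def)

lemma Bs_in_Idx [simp]: "Bs a k \<in> Idx N n \<longleftrightarrow> 1 \<le> k \<and> k \<le> N \<and> a < n k"
  by (auto simp: Idx_def)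

lemma Mn_Pl_in_Idx [simp]: "Mn \<in> Idx N n" "Pl \<in> Idx N n"
  by (auto simp: Idx_def)

lemma finite_Idx [simp]: "finite (Idx N n)"
proof -
  have "Idx N n = {Mn, Pl} \<union> (\<lambda>(k, a). Bs a k) ` (SIGMA k:{1..N}. {..<n k})"
    by (auto simp: Idx_def image_iff)
  then show ?thesis by (simp only:) auto
qed

lemma sum_Idx_level:
  assumes "1 \<le> k" "k \<le> N" and vanish: "\<And>j. j \<in> Idx N n \<Longrightarrow> (\<And>a. j \<noteq> Bs a k) \<Longrightarrow> F j = 0"
  shows "(\<Sum>j\<in>Idx N n. F j) = (\<Sum>a<n k. F (Bs a k))"
proof -
  have "(\<Sum>j\<in>Idx N n. F j) = (\<Sum>j\<in>(\<lambda>a. Bs a k) ` {..<n k}. F j)"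
  proof (rule sum.mono_neutral_right)
    show "\<forall>j\<in>Idx N n - (\<lambda>a. Bs a k) ` {..<n k}. F j = 0"
    proof
      fix j assume j: "j \<in> Idx N n - (\<lambda>a. Bs a k) ` {..<n k}"
      then have "j \<noteq> Bs a k" for a by auto
      with j show "F j = 0" by (auto intro: vanish)
    qed
  qed (use assms(1,2) in auto)
  also have "\<dots> = (\<Sum>a<n k. F (Bs a k))"
    by (subst sum.reindex) (auto simp: inj_on_def)
  finally show ?thesis .
qed

lemma sum_eq_single:
  assumes "finite S" "\<And>k. k \<in> S \<Longrightarrow> k \<noteq> j \<Longrightarrow> f k = 0"
  shows "(\<Sum>k\<in>S. f k) = (if j \<in> S then f j else 0)"
proof (cases "j \<in> S")
  case True
  then show ?thesis using assms by (simp add: sum.remove)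
next
  case False
  then show ?thesis using assms by (intro trans[OF sum.neutral]) auto
qed

lemma Hsp_sum:
  "(\<And>j. j \<in> J \<Longrightarrow> f j \<in> Hsp N n) \<Longrightarrow> (\<lambda>i. \<Sum>j\<in>J. f j i) \<in> Hsp N n"
  unfolding Hsp_def by (auto intro!: sum.neutral)

lemma mapply_sum: "mapply N n M (\<lambda>i. \<Sum>j\<in>J. f j i) = (\<lambda>i. \<Sum>j\<in>J. mapply N n M (f j) i)"
  unfolding mapply_def sum_distrib_left by (rule ext, rule sum.swap)

lemma mapply_scale: "mapply N n M (\<lambda>i. c * x i) = (\<lambda>i. c * mapply N n M x i)"
  unfolding mapply_def by (simp add: sum_distrib_left mult_ac)

lemma mapply_zero [simp]: "mapply N n M (\<lambda>_. 0) = (\<lambda>_. 0)"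
  unfolding mapply_def by simp

lemma mapply_ket: "j \<in> Idx N n \<Longrightarrow> mapply N n M (ket j) = (\<lambda>i. M i j)"
  unfolding mapply_def ket_def by (simp add: if_distrib[of "\<lambda>t. _ * t"] sum.delta' cong: if_cong)

lemma mapply_mmult: "mapply N n (mmult N n A B) x = mapply N n A (mapply N n B x)"
proof
  fix i
  have "mapply N n (mmult N n A B) x i = (\<Sum>j\<in>Idx N n. \<Sum>l\<in>Idx N n. A i l * B l j * x j)"
    unfolding mapply_def mmult_def sum_distrib_right ..
  also have "\<dots> = (\<Sum>l\<in>Idx N n. \<Sum>j\<in>Idx N n. A i l * B l j * x j)" by (rule sum.swap)
  also have "\<dots> = mapply N n A (mapply N n B x) i"
    unfolding mapply_def sum_distrib_left by (simp add: mult.assoc)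
  finally show "mapply N n (mmult N n A B) x i = mapply N n A (mapply N n B x) i" .
qed

lemma adj_adj [simp]: "adj (adj M) = M"
  by (simp add: adj_def)

lemma hinner_mapply_left: "hinner N n (mapply N n M x) y = hinner N n x (mapply N n (adj M) y)"
proof -
  have "hinner N n (mapply N n M x) y = (\<Sum>i\<in>Idx N n. \<Sum>j\<in>Idx N n. cnj (M i j) * cnj (x j) * y i)"
    unfolding hinner_def mapply_def cnj_sum sum_distrib_right by (intro sum.cong refl) simp
  also have "\<dots> = (\<Sum>j\<in>Idx N n. \<Sum>i\<in>Idx N n. cnj (M i j) * cnj (x j) * y i)"
    by (rule sum.swap)
  also have "\<dots> = hinner N n x (mapply N n (adj M) y)"
    unfolding hinner_def mapply_def adj_def sum_distrib_left by (intro sum.cong refl) simp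
  finally show ?thesis .
qed

lemma hinner_mapply_right: "hinner N n x (mapply N n M y) = hinner N n (mapply N n (adj M) x) y"
  using hinner_mapply_left[of N n "adj M" x y] by simp

lemma hinner_sum_right: "hinner N n x (\<lambda>i. \<Sum>j\<in>J. f j i) = (\<Sum>j\<in>J. hinner N n x (f j))"
  unfolding hinner_def sum_distrib_left by (rule sum.swap)

lemma hinner_scale_left: "hinner N n (\<lambda>i. c * x i) y = cnj c * hinner N n x y"
  unfolding hinner_def by (simp add: sum_distrib_left mult_ac)

lemma hinner_zero [simp]: "hinner N n x (\<lambda>_. 0) = 0" "hinner N n (\<lambda>_. 0) x = 0"
  unfolding hinner_def by simp_all

lemma hinner_ket: "j \<in> Idx N n \<Longrightarrow> hinner N n (ket j) v = v j"
  unfolding hinner_def ket_def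
  by (simp add: if_distrib[of cnj] if_distrib[of "\<lambda>t. t * _"] sum.delta cong: if_cong)

lemma hinner_Proj: "hinner N n (Proj k x) y = hinner N n x (Proj k y)"
  unfolding hinner_def Proj_def by (intro sum.cong refl) (auto split: bidx.split)

lemma Proj_Proj: "Proj k (Proj j x) = (if j = k then Proj k x else (\<lambda>_. 0))"
  unfolding Proj_def by (auto split: bidx.split)

lemma Proj_sum: "Proj k (\<lambda>i. \<Sum>j\<in>J. f j i) = (\<lambda>i. \<Sum>j\<in>J. Proj k (f j) i)"
  unfolding Proj_def by (auto split: bidx.split)

lemma Proj_zero [simp]: "Proj k (\<lambda>_. 0) = (\<lambda>_. 0)"
  unfolding Proj_def by (auto split: bidx.split)

lemma Proj_scale: "Proj k (\<lambda>i. c * x i) = (\<lambda>i. c * Proj k x i)"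
  unfolding Proj_def by (auto split: bidx.split)

lemma Proj_ket_Mn_Pl [simp]: "Proj k (ket Mn) = (\<lambda>_. 0)" "Proj k (ket Pl) = (\<lambda>_. 0)"
  unfolding Proj_def ket_def by (auto split: bidx.split)

lemma Proj_Hsp: "x \<in> Hsp N n \<Longrightarrow> Proj k x \<in> Hsp N n"
  unfolding Proj_def Hsp_def by (auto split: bidx.split)

lemma Hsp_eq_sum_Proj:
  assumes "x \<in> Hsp N n" "x Mn = 0" "x Pl = 0"
  shows "x = (\<lambda>i. \<Sum>j\<in>{1..N}. Proj j x i)"
proof
  fix i
  show "x i = (\<Sum>j\<in>{1..N}. Proj j x i)"
  proof (cases i)
    case (Bs a k)
    have "(\<Sum>j\<in>{1..N}. Proj j x i) = (if k \<in> {1..N} then Proj k x i else 0)"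
      by (rule sum_eq_single) (auto simp: Proj_def Bs)
    also have "\<dots> = x i"
      using assms(1) by (auto simp: Proj_def Hsp_def Bs)
    finally show ?thesis ..
  qed (use assms in \<open>simp_all add: Proj_def\<close>)
qed

definition Esp :: "nat \<Rightarrow> (nat \<Rightarrow> nat) \<Rightarrow> nat \<Rightarrow> hvec set" where
  "Esp N n k = {x \<in> Hsp N n. Proj k x = x}"

lemma Esp_scale: "x \<in> Esp N n k \<Longrightarrow> (\<lambda>i. c * x i) \<in> Esp N n k"
  unfolding Esp_def Hsp_def by (simp add: Proj_scale)

section \<open>Sums of families of subspaces\<close>

definition sumset :: "(nat \<Rightarrow> hvec set) \<Rightarrow> nat set \<Rightarrow> hvec set" where
  "sumset A J = {(\<lambda>i. \<Sum>j\<in>J. f j i) | f. \<forall>j\<in>J. f j \<in> A j}"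

lemma sumsetI: "\<forall>j\<in>J. f j \<in> A j \<Longrightarrow> (\<lambda>i. \<Sum>j\<in>J. f j i) \<in> sumset A J"
  unfolding sumset_def by blast

lemma sumset_cong: "(\<And>j. j \<in> J \<Longrightarrow> A j = B j) \<Longrightarrow> sumset A J = sumset B J"
  unfolding sumset_def by auto

lemma sumset_reindex:
  assumes h: "inj_on h J"
  shows "sumset A (h ` J) = sumset (\<lambda>j. A (h j)) J"
proof
  show "sumset A (h ` J) \<subseteq> sumset (\<lambda>j. A (h j)) J"
  proof
    fix x assume "x \<in> sumset A (h ` J)"
    then obtain f where f: "\<forall>j\<in>h ` J. f j \<in> A j" "x = (\<lambda>i. \<Sum>j\<in>h ` J. f j i)"
      by (auto simp: sumset_def)
    then have "x = (\<lambda>i. \<Sum>j\<in>J. f (h j) i)" by (simp add: sum.reindex[OF h])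
    with f(1) show "x \<in> sumset (\<lambda>j. A (h j)) J"
      unfolding sumset_def by (intro CollectI exI[of _ "\<lambda>j. f (h j)"]) auto
  qed
  show "sumset (\<lambda>j. A (h j)) J \<subseteq> sumset A (h ` J)"
  proof
    fix x assume "x \<in> sumset (\<lambda>j. A (h j)) J"
    then obtain g where g: "\<forall>j\<in>J. g j \<in> A (h j)" "x = (\<lambda>i. \<Sum>j\<in>J. g j i)"
      by (auto simp: sumset_def)
    define f where "f j' = g (inv_into J h j')" for j'
    have fh: "f (h j) = g j" if "j \<in> J" for j
      using h that by (simp add: f_def)
    have "x = (\<lambda>i. \<Sum>j'\<in>h ` J. f j' i)"
      using fh by (simp add: g(2) sum.reindex[OF h])
    moreover have "\<forall>j'\<in>h ` J. f j' \<in> A j'" using fh g(1) by auto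
    ultimately show "x \<in> sumset A (h ` J)" unfolding sumset_def by blast
  qed
qed

lemma sumset_image:
  assumes L_sum: "\<And>f. L (\<lambda>i. \<Sum>j\<in>J. f j i) = (\<lambda>i. \<Sum>j\<in>J. L (f j) i)"
  shows "L ` sumset A J = sumset (\<lambda>j. L ` A j) J"
proof
  show "L ` sumset A J \<subseteq> sumset (\<lambda>j. L ` A j) J"
    unfolding sumset_def using L_sum by auto
  show "sumset (\<lambda>j. L ` A j) J \<subseteq> L ` sumset A J"
  proof
    fix y assume "y \<in> sumset (\<lambda>j. L ` A j) J"
    then obtain g where g: "\<forall>j\<in>J. g j \<in> L ` A j" "y = (\<lambda>i. \<Sum>j\<in>J. g j i)"
      by (auto simp: sumset_def)
    then have "\<forall>j\<in>J. \<exists>x. x \<in> A j \<and> g j = L x" by blast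
    then have "\<exists>f. \<forall>j\<in>J. f j \<in> A j \<and> g j = L (f j)" by (rule bchoice)
    then obtain f where f: "\<forall>j\<in>J. f j \<in> A j \<and> g j = L (f j)" by blast
    then have "y = L (\<lambda>i. \<Sum>j\<in>J. f j i)" by (simp add: g(2) L_sum)
    moreover have "(\<lambda>i. \<Sum>j\<in>J. f j i) \<in> sumset A J" using f unfolding sumset_def by blast
    ultimately show "y \<in> L ` sumset A J" by blast
  qed
qed

lemma sumset_mono_neutral:
  assumes "finite J" "J' \<subseteq> J" and zero: "\<And>j. j \<in> J - J' \<Longrightarrow> A j = {\<lambda>_. 0}"
  shows "sumset A J = sumset A J'"
proof
  show "sumset A J \<subseteq> sumset A J'"
  proof
    fix x assume "x \<in> sumset A J"
    then obtain f where f: "\<forall>j\<in>J. f j \<in> A j" "x = (\<lambda>i. \<Sum>j\<in>J. f j i)"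
      by (auto simp: sumset_def)
    have "(\<Sum>j\<in>J. f j i) = (\<Sum>j\<in>J'. f j i)" for i
      using f(1) zero assms(1,2) by (intro sum.mono_neutral_right) auto
    then show "x \<in> sumset A J'" using f assms(2) unfolding sumset_def by auto
  qed
  show "sumset A J' \<subseteq> sumset A J"
  proof
    fix x assume "x \<in> sumset A J'"
    then obtain f where f: "\<forall>j\<in>J'. f j \<in> A j" "x = (\<lambda>i. \<Sum>j\<in>J'. f j i)"
      by (auto simp: sumset_def)
    define f' where "f' j = (if j \<in> J' then f j else (\<lambda>_. 0))" for j
    have "(\<Sum>j\<in>J. f' j i) = (\<Sum>j\<in>J'. f j i)" for i
      using assms(1,2) by (subst sum.mono_neutral_cong_right) (auto simp: f'_def)
    then have "x = (\<lambda>i. \<Sum>j\<in>J. f' j i)" using f(2) by simp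
    moreover have "\<forall>j\<in>J. f' j \<in> A j" using f(1) zero by (auto simp: f'_def)
    ultimately show "x \<in> sumset A J" unfolding sumset_def by blast
  qed
qed

lemma is_direct_sum_levels:
  assumes J: "finite J" and lv: "inj_on lv J"
    and A: "\<And>j x. j \<in> J \<Longrightarrow> x \<in> A j \<Longrightarrow> Proj (lv j) x = x"
    and W: "W = sumset A J"
  shows "is_direct_sum W A J"
  unfolding is_direct_sum_def
proof (intro conjI allI impI)
  show "W = {(\<lambda>i. \<Sum>j\<in>J. f j i) | f. \<forall>j\<in>J. f j \<in> A j}" using W by (simp add: sumset_def)
next
  fix f :: "nat \<Rightarrow> hvec"
  assume f: "(\<forall>j\<in>J. f j \<in> A j) \<and> (\<lambda>i. \<Sum>j\<in>J. f j i) = (\<lambda>i. 0)"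
  show "\<forall>j\<in>J. f j = (\<lambda>i. 0)"
  proof
    fix j0 assume j0: "j0 \<in> J"
    have "Proj (lv j0) (f j) = (if j = j0 then f j0 else (\<lambda>_. 0))" if j: "j \<in> J" for j
    proof (cases "j = j0")
      case True
      then show ?thesis using A f j0 by simp
    next
      case False
      then have "lv j \<noteq> lv j0" using lv j j0 by (auto dest: inj_onD)
      moreover have "Proj (lv j) (f j) = f j" using A f j by simp
      ultimately show ?thesis using Proj_Proj[of "lv j0" "lv j" "f j"] False by simp
    qed
    then have "Proj (lv j0) (\<lambda>i. \<Sum>j\<in>J. f j i) = f j0"
      using J j0 by (simp add: Proj_sum if_distrib[of "\<lambda>g. g _"] cong: sum.cong)
    then show "f j0 = (\<lambda>i. 0)" using f by simp
  qed
qed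

section \<open>The operators \<open>Z\<^sub>k\<close>\<close>

lemma ketbra_ket [simp]: "ketbra (ket x) (ket y) i j = (if i = x \<and> j = y then 1 else 0)"
  by (simp add: ketbra_def ket_def)

lemma Zk_entry:
  "Zk n k (Bs b k') (Bs a k'') =
     (if k' = Suc k \<and> k'' = k \<and> b < n (Suc k) \<and> a < n k then inv_sqrt n k * zeta n k ^ (b*a) else 0)"
proof (cases "k' = Suc k \<and> k'' = k \<and> b < n (Suc k) \<and> a < n k")
  case True
  define X where "X = inv_sqrt n k * zeta n k ^ (b*a)"
  have "Zk n k (Bs b k') (Bs a k'') =
      (\<Sum>b'<n (Suc k). \<Sum>a'<n k. if b' = b then if a' = a then X else 0 else 0)"
    unfolding Zk_def inv_sqrt_def X_def using True by (intro sum.cong refl) auto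
  also have "\<dots> = (\<Sum>b'<n (Suc k). if b' = b then X else 0)"
    using True by (intro sum.cong refl) (simp add: sum.delta)
  also have "\<dots> = X"
    using True by (simp add: sum.delta)
  finally show ?thesis using True by (simp add: X_def)
next
  case False
  then have "Zk n k (Bs b k') (Bs a k'') = 0"
    unfolding Zk_def by (intro sum.neutral ballI) auto
  then show ?thesis by (simp only: if_not_P[OF False])
qed

lemma Zk_Mn_Pl [simp]: "Zk n k Mn j = 0" "Zk n k Pl j = 0" "Zk n k i Mn = 0" "Zk n k i Pl = 0"
  unfolding Zk_def by auto

lemma mapply_Zk:
  assumes "1 \<le> k" "k \<le> N"
  shows "mapply N n (Zk n k) x = (\<lambda>i. case i of
      Bs b k' \<Rightarrow> if k' = Suc k \<and> b < n (Suc k)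
                 then \<Sum>a<n k. inv_sqrt n k * zeta n k ^ (b*a) * x (Bs a k) else 0
    | _ \<Rightarrow> 0)"
proof
  fix i
  show "mapply N n (Zk n k) x i = (case i of
      Bs b k' \<Rightarrow> if k' = Suc k \<and> b < n (Suc k)
                 then \<Sum>a<n k. inv_sqrt n k * zeta n k ^ (b*a) * x (Bs a k) else 0
    | _ \<Rightarrow> 0)"
  proof (cases i)
    case (Bs b k')
    have "mapply N n (Zk n k) x i = (\<Sum>a<n k. Zk n k i (Bs a k) * x (Bs a k))"
      unfolding mapply_def
    proof (rule sum_Idx_level[OF assms])
      fix j assume "j \<in> Idx N n" "\<And>a. j \<noteq> Bs a k"
      then show "Zk n k i j * x j = 0" using Bs by (cases j) (auto simp: Zk_entry)
    qed
    then show ?thesis using Bs by (auto simp: Zk_entry intro!: sum.cong)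
  qed (auto simp: mapply_def)
qed

lemma mapply_adj_Zk:
  assumes "1 \<le> k" "Suc k \<le> N"
  shows "mapply N n (adj (Zk n k)) y = (\<lambda>i. case i of
      Bs a k' \<Rightarrow> if k' = k \<and> a < n k
                 then \<Sum>b<n (Suc k). inv_sqrt n k * cnj (zeta n k ^ (b*a)) * y (Bs b (Suc k)) else 0
    | _ \<Rightarrow> 0)"
proof
  fix i
  show "mapply N n (adj (Zk n k)) y i = (case i of
      Bs a k' \<Rightarrow> if k' = k \<and> a < n k
                 then \<Sum>b<n (Suc k). inv_sqrt n k * cnj (zeta n k ^ (b*a)) * y (Bs b (Suc k)) else 0
    | _ \<Rightarrow> 0)"
  proof (cases i)
    case (Bs a k')
    have "mapply N n (adj (Zk n k)) y i =
        (\<Sum>b<n (Suc k). adj (Zk n k) i (Bs b (Suc k)) * y (Bs b (Suc k)))"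
      unfolding mapply_def
    proof (rule sum_Idx_level)
      fix j assume "j \<in> Idx N n" "\<And>b. j \<noteq> Bs b (Suc k)"
      then show "adj (Zk n k) i j * y j = 0" using Bs by (cases j) (auto simp: Zk_entry adj_def)
    qed (use assms in auto)
    then show ?thesis using Bs by (auto simp: Zk_entry adj_def intro!: sum.cong)
  qed (auto simp: mapply_def adj_def)
qed

lemma Zk_in_Esp:
  assumes "1 \<le> k" "Suc k \<le> N"
  shows "mapply N n (Zk n k) x \<in> Esp N n (Suc k)"
  using assms unfolding mapply_Zk[OF assms(1) Suc_leD[OF assms(2)]] Esp_def Hsp_def Proj_def
  by (auto split: bidx.split)

lemma adj_Zk_in_Esp:
  assumes "1 \<le> k" "Suc k \<le> N"
  shows "mapply N n (adj (Zk n k)) y \<in> Esp N n k"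
  using assms unfolding mapply_adj_Zk[OF assms] Esp_def Hsp_def Proj_def
  by (auto split: bidx.split)

lemma Zk_Proj:
  assumes "1 \<le> k" "k \<le> N"
  shows "mapply N n (Zk n k) (Proj j x) = (if j = k then mapply N n (Zk n k) x else (\<lambda>_. 0))"
  unfolding mapply_Zk[OF assms] Proj_def by (auto split: bidx.split)

lemma adj_Zk_Proj:
  assumes "1 \<le> k" "Suc k \<le> N"
  shows "mapply N n (adj (Zk n k)) (Proj j y) =
    (if j = Suc k then mapply N n (adj (Zk n k)) y else (\<lambda>_. 0))"
  unfolding mapply_adj_Zk[OF assms] Proj_def by (auto split: bidx.split)

text \<open>Since \<open>n\<^bsub>k+1\<^esub> \<le> n\<^sub>k\<close>, the rows of \<open>Z\<^sub>k\<close> are distinct rows of the unitary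
  \<open>n\<^sub>k \<times> n\<^sub>k\<close> Fourier matrix, hence orthonormal.\<close>

lemma Zk_adj_Zk:
  assumes k: "1 \<le> k" "Suc k \<le> N" and n: "0 < n k" "n (Suc k) \<le> n k" and y: "y \<in> Hsp N n"
  shows "mapply N n (Zk n k) (mapply N n (adj (Zk n k)) y) = Proj (Suc k) y"
proof
  fix i
  define z where "z = zeta n k"
  define c where "c = inv_sqrt n k"
  show "mapply N n (Zk n k) (mapply N n (adj (Zk n k)) y) i = Proj (Suc k) y i"
  proof (cases "\<exists>b. i = Bs b (Suc k) \<and> b < n (Suc k)")
    case True
    then obtain b where b: "i = Bs b (Suc k)" "b < n (Suc k)" by blast
    have "mapply N n (Zk n k) (mapply N n (adj (Zk n k)) y) i =
        (\<Sum>a<n k. c * z^(b*a) * (\<Sum>b'<n (Suc k). c * cnj (z^(b'*a)) * y (Bs b' (Suc k))))"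
      unfolding mapply_Zk[OF k(1) Suc_leD[OF k(2)]] mapply_adj_Zk[OF k] using b
      by (simp add: z_def c_def)
    also have "\<dots> = (\<Sum>a<n k. \<Sum>b'<n (Suc k). c * c * (z^(b*a) * cnj (z^(b'*a))) * y (Bs b' (Suc k)))"
      by (simp add: sum_distrib_left mult_ac)
    also have "\<dots> = (\<Sum>b'<n (Suc k). c * c * (\<Sum>a<n k. z^(b*a) * cnj (z^(b'*a))) * y (Bs b' (Suc k)))"
      by (subst sum.swap) (simp add: sum_distrib_left sum_distrib_right)
    also have "\<dots> = (\<Sum>b'<n (Suc k). c * c * (if b = b' then of_nat (n k) else 0) * y (Bs b' (Suc k)))"
    proof (intro sum.cong refl)
      fix b' assume "b' \<in> {..<n (Suc k)}"
      then have "(\<Sum>a<n k. z^(b*a) * cnj (z^(b'*a))) = (if b = b' then of_nat (n k) else 0)"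
        unfolding z_def zeta_def using sum_cis_roots_orthogonal[of b "n k" b'] b n by auto
      then show "c * c * (\<Sum>a<n k. z^(b*a) * cnj (z^(b'*a))) * y (Bs b' (Suc k)) =
          c * c * (if b = b' then of_nat (n k) else 0) * y (Bs b' (Suc k))"
        by simp
    qed
    also have "\<dots> = c * c * of_nat (n k) * y (Bs b (Suc k))"
      using b by (simp add: if_distrib[of "\<lambda>t. c * c * t * _"] sum.delta cong: if_cong)
    also have "\<dots> = Proj (Suc k) y i" using inv_sqrt_square[of n k] n b by (simp add: c_def Proj_def)
    finally show ?thesis .
  next
    case False
    have "Proj (Suc k) y i = 0"
      using False y by (auto simp: Proj_def Hsp_def split: bidx.split)
    then show ?thesis
      unfolding mapply_Zk[OF k(1) Suc_leD[OF k(2)]] using False by (auto split: bidx.split)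
  qed
qed

lemma phi0_eq:
  "phi n 0 k = (\<lambda>i. case i of Bs b k' \<Rightarrow> if k' = k \<and> b < n k then inv_sqrt n k else 0 | _ \<Rightarrow> 0)"
proof
  fix i
  show "phi n 0 k i = (case i of Bs b k' \<Rightarrow> if k' = k \<and> b < n k then inv_sqrt n k else 0 | _ \<Rightarrow> 0)"
  proof (cases i)
    case (Bs b k')
    have "phi n 0 k i = (\<Sum>b'<n k. if b' = b then if k' = k then inv_sqrt n k else 0 else 0)"
      unfolding phi_def ket_def inv_sqrt_def using Bs by (intro sum.cong refl) auto
    then show ?thesis using Bs by (simp add: sum.delta)
  qed (auto simp: phi_def ket_def)
qed

lemma phi0_in_Esp: "1 \<le> k \<Longrightarrow> k \<le> N \<Longrightarrow> phi n 0 k \<in> Esp N n k"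
  unfolding phi0_eq Esp_def Hsp_def Proj_def by (auto split: bidx.split)

lemma ket0_in_Esp: "1 \<le> k \<Longrightarrow> k \<le> N \<Longrightarrow> 0 < n k \<Longrightarrow> ket (Bs 0 k) \<in> Esp N n k"
  unfolding ket_def Esp_def Hsp_def Proj_def by (auto split: bidx.split)

lemma Zk_phi0:
  assumes k: "1 \<le> k" "Suc k \<le> N" and n: "0 < n (Suc k)" "n (Suc k) \<le> n k"
  shows "mapply N n (Zk n k) (phi n 0 k) = ket (Bs 0 (Suc k))"
proof
  fix i
  have nk: "0 < n k" using n by simp
  show "mapply N n (Zk n k) (phi n 0 k) i = ket (Bs 0 (Suc k)) i"
  proof (cases "\<exists>b. i = Bs b (Suc k) \<and> b < n (Suc k)")
    case True
    then obtain b where b: "i = Bs b (Suc k)" "b < n (Suc k)" by blast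
    have "mapply N n (Zk n k) (phi n 0 k) i =
        (\<Sum>a<n k. inv_sqrt n k * inv_sqrt n k * (zeta n k^(b*a) * cnj (zeta n k^(0*a))))"
      unfolding mapply_Zk[OF k(1) Suc_leD[OF k(2)]] phi0_eq using b by (simp add: mult_ac)
    also have "\<dots> = inv_sqrt n k * inv_sqrt n k * (if b = 0 then of_nat (n k) else 0)"
      unfolding sum_distrib_left[symmetric] zeta_def
      using sum_cis_roots_orthogonal[of b "n k" 0] b n nk by simp
    also have "\<dots> = ket (Bs 0 (Suc k)) i" using inv_sqrt_square[of n k] nk b by (simp add: ket_def)
    finally show ?thesis .
  next
    case False
    then show ?thesis unfolding mapply_Zk[OF k(1) Suc_leD[OF k(2)]] ket_def using n
      by (auto split: bidx.split)
  qed
qed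

lemma Zk_ket0:
  assumes k: "1 \<le> k" "Suc k \<le> N" and n: "0 < n k" "0 < n (Suc k)"
  shows "mapply N n (Zk n k) (ket (Bs 0 k)) = (\<lambda>i. (inv_sqrt n k / inv_sqrt n (Suc k)) * phi n 0 (Suc k) i)"
  unfolding mapply_Zk[OF k(1) Suc_leD[OF k(2)]] phi0_eq ket_def using n inv_sqrt_nonzero[of n "Suc k"]
  by (auto split: bidx.split simp: sum.delta[where 'b=complex] if_distrib[of "\<lambda>t. _ * t"] cong: if_cong)

lemma adj_Zk_ket0:
  assumes k: "1 \<le> k" "Suc k \<le> N" and n: "0 < n k" "0 < n (Suc k)"
  shows "mapply N n (adj (Zk n k)) (ket (Bs 0 (Suc k))) = phi n 0 k"
  unfolding mapply_adj_Zk[OF k] phi0_eq ket_def using n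
  by (auto split: bidx.split simp: sum.delta[where 'b=complex] if_distrib[of "\<lambda>t. _ * t"] cong: if_cong)

lemma mapply_Zop: "mapply N n (Zop N n) x = (\<lambda>i. \<Sum>k\<in>{1..N-1}. mapply N n (Zk n k) x i)"
  unfolding mapply_def Zop_def sum_distrib_right by (rule ext, rule sum.swap)

lemma mapply_adj_Zop:
  "mapply N n (adj (Zop N n)) x = (\<lambda>i. \<Sum>k\<in>{1..N-1}. mapply N n (adj (Zk n k)) x i)"
  unfolding mapply_def Zop_def adj_def cnj_sum sum_distrib_right by (rule ext, rule sum.swap)

lemma Zop_Esp:
  assumes "x \<in> Esp N n j"
  shows "mapply N n (Zop N n) x = (if 1 \<le> j \<and> j < N then mapply N n (Zk n j) x else (\<lambda>_. 0))"
proof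
  fix i
  have "mapply N n (Zk n k) x = (\<lambda>_. 0)" if "k \<in> {1..N-1}" "k \<noteq> j" for k
    using Zk_Proj[of k N n j x] that assms by (auto simp: Esp_def)
  then have "(\<Sum>k\<in>{1..N-1}. mapply N n (Zk n k) x i) =
      (if j \<in> {1..N-1} then mapply N n (Zk n j) x i else 0)"
    by (intro sum_eq_single) auto
  then show "mapply N n (Zop N n) x i =
      (if 1 \<le> j \<and> j < N then mapply N n (Zk n j) x else (\<lambda>_. 0)) i"
    unfolding mapply_Zop by auto
qed

lemma adj_Zop_Esp:
  assumes "x \<in> Esp N n j"
  shows "mapply N n (adj (Zop N n)) x =
    (if 2 \<le> j \<and> j \<le> N then mapply N n (adj (Zk n (j - 1))) x else (\<lambda>_. 0))"
proof
  fix i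
  have "mapply N n (adj (Zk n k)) x = (\<lambda>_. 0)" if "k \<in> {1..N-1}" "k \<noteq> j - 1" for k
  proof -
    have "1 \<le> k" "Suc k \<le> N" "j \<noteq> Suc k" using that by auto
    then show ?thesis using adj_Zk_Proj[of k N n j x] assms by (simp add: Esp_def)
  qed
  then have "(\<Sum>k\<in>{1..N-1}. mapply N n (adj (Zk n k)) x i) =
      (if j - 1 \<in> {1..N-1} then mapply N n (adj (Zk n (j - 1))) x i else 0)"
    by (intro sum_eq_single) auto
  then show "mapply N n (adj (Zop N n)) x i =
      (if 2 \<le> j \<and> j \<le> N then mapply N n (adj (Zk n (j - 1))) x else (\<lambda>_. 0)) i"
    unfolding mapply_adj_Zop by auto
qed

lemma Zop_Hsp: "mapply N n (Zop N n) x \<in> Hsp N n"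
  unfolding mapply_Zop using Zk_in_Esp by (intro Hsp_sum) (auto simp: Esp_def)

lemma adj_Zop_Hsp: "mapply N n (adj (Zop N n)) x \<in> Hsp N n"
  unfolding mapply_adj_Zop using adj_Zk_in_Esp by (intro Hsp_sum) (auto simp: Esp_def)

lemma Zop_ket_Mn_Pl:
  "mapply N n (Zop N n) (ket Mn) = (\<lambda>_. 0)" "mapply N n (Zop N n) (ket Pl) = (\<lambda>_. 0)"
  "mapply N n (adj (Zop N n)) (ket Mn) = (\<lambda>_. 0)" "mapply N n (adj (Zop N n)) (ket Pl) = (\<lambda>_. 0)"
  by (simp_all add: mapply_ket Zop_def adj_def)

lemma Zpow_Suc: "Zpow N n (Suc j) x = mapply N n (Zop N n) (Zpow N n j x)"
  by (simp add: Zpow_def)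

lemma Zpow_Suc_right: "Zpow N n (Suc j) x = Zpow N n j (mapply N n (Zop N n) x)"
  unfolding Zpow_def by (simp only: funpow_Suc_right o_apply)

lemma Zadjpow_Suc: "Zadjpow N n (Suc j) x = mapply N n (adj (Zop N n)) (Zadjpow N n j x)"
  by (simp add: Zadjpow_def)

lemma Zpow_zero: "Zpow N n j (\<lambda>_. 0) = (\<lambda>_. 0)"
  by (induction j) (simp_all add: Zpow_Suc, simp add: Zpow_def)

lemma Zpow_sum: "Zpow N n j (\<lambda>i. \<Sum>l\<in>J. f l i) = (\<lambda>i. \<Sum>l\<in>J. Zpow N n j (f l) i)"
  by (induction j) (simp_all add: Zpow_Suc mapply_sum, simp add: Zpow_def)

lemma Zpow_Esp_vanish:
  assumes "x \<in> Esp N n d" "d \<le> N" "N < d + j"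
  shows "Zpow N n j x = (\<lambda>_. 0)"
  using assms
proof (induction j arbitrary: x d)
  case 0
  then show ?case by simp
next
  case (Suc j)
  show ?case
  proof (cases "1 \<le> d \<and> d < N")
    case True
    then have "mapply N n (Zop N n) x = mapply N n (Zk n d) x"
      using Zop_Esp[OF Suc.prems(1)] by simp
    moreover have "mapply N n (Zk n d) x \<in> Esp N n (Suc d)"
      using True by (intro Zk_in_Esp) auto
    ultimately show ?thesis
      using Suc.IH[of _ "Suc d"] Suc.prems True by (simp add: Zpow_Suc_right)
  next
    case False
    have "mapply N n (Zop N n) x = (\<lambda>_. 0)"
      using Zop_Esp[OF Suc.prems(1)] unfolding if_not_P[OF False] .
    then show ?thesis by (simp add: Zpow_Suc_right Zpow_zero)
  qed
qed

lemma Zadjpow_phi0_in_Esp: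
  assumes "p \<le> N" "t < p"
  shows "Zadjpow N n t (phi n 0 p) \<in> Esp N n (p - t)"
  using assms(2)
proof (induction t)
  case 0
  then show ?case using phi0_in_Esp assms(1) by (simp add: Zadjpow_def)
next
  case (Suc t)
  then have "Zadjpow N n t (phi n 0 p) \<in> Esp N n (Suc (p - Suc t))"
    by (simp add: Suc_diff_Suc)
  moreover have "1 \<le> p - Suc t" "Suc (p - Suc t) \<le> N" using Suc.prems assms(1) by auto
  ultimately show ?case
    using adj_Zop_Esp adj_Zk_in_Esp by (simp add: Zadjpow_Suc)
qed

lemma Zadjpow_phi0_vanish:
  assumes "1 \<le> p" "p \<le> N"
  shows "Zadjpow N n p (phi n 0 p) = (\<lambda>_. 0)"
proof -
  have "Zadjpow N n (p - 1) (phi n 0 p) \<in> Esp N n 1"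
    using Zadjpow_phi0_in_Esp[of p N "p - 1" n] assms by simp
  then have "mapply N n (adj (Zop N n)) (Zadjpow N n (p - 1) (phi n 0 p)) = (\<lambda>_. 0)"
    using adj_Zop_Esp by simp
  then show ?thesis
    using assms(1) Zadjpow_Suc[of N n "p - 1"] by simp
qed

section \<open>The subspace \<open>V\<close>\<close>

definition Vperp :: "nat \<Rightarrow> (nat \<Rightarrow> nat) \<Rightarrow> hvec set" where
  "Vperp N n = {s. \<forall>v\<in>Vsp N n. hinner N n s v = 0}"

lemma Sset_subset_Vperp: "Sset N n \<subseteq> Vperp N n"
  by (auto simp: Vperp_def Vsp_def)

lemma zero_in_Vperp [simp]: "(\<lambda>_. 0) \<in> Vperp N n"
  by (simp add: Vperp_def)

lemma Vperp_scale: "s \<in> Vperp N n \<Longrightarrow> (\<lambda>i. c * s i) \<in> Vperp N n"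
  by (simp add: Vperp_def hinner_scale_left)

lemma Vperp_scale_cancel: "c \<noteq> 0 \<Longrightarrow> (\<lambda>i. c * s i) \<in> Vperp N n \<Longrightarrow> s \<in> Vperp N n"
  by (simp add: Vperp_def hinner_scale_left)

lemma Sset_cases:
  assumes "s \<in> Sset N n"
  obtains "s = ket Mn" | "s = ket Pl"
   | m where "m \<le> N - 1" "s = Zpow N n m (phi n 0 1)"
   | m where "m \<le> N - 1" "s = Zadjpow N n m (phi n 0 N)"
   | m t where "1 \<le> m" "2 * m \<le> N - 1" "1 \<le> t" "t \<le> 2 * m" "s = Zadjpow N n t (phi n 0 (2 * m + 1))"
  using assms unfolding Sset_def by blast

lemma Zpow_phi0_in_Sset: "m \<le> N - 1 \<Longrightarrow> Zpow N n m (phi n 0 1) \<in> Sset N n"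
  unfolding Sset_def by blast

lemma Zadjpow_phi0_top_in_Sset: "m \<le> N - 1 \<Longrightarrow> Zadjpow N n m (phi n 0 N) \<in> Sset N n"
  unfolding Sset_def by blast

lemma Zadjpow_phi0_odd_in_Sset:
  "1 \<le> m \<Longrightarrow> 2 * m \<le> N - 1 \<Longrightarrow> 1 \<le> t \<Longrightarrow> t \<le> 2 * m \<Longrightarrow>
    Zadjpow N n t (phi n 0 (2 * m + 1)) \<in> Sset N n"
  unfolding Sset_def by blast

lemma zero_in_Vsp: "(\<lambda>_. 0) \<in> Vsp N n"
  by (simp add: Vsp_def Hsp_def)

lemma Vsp_sum: "(\<And>j. j \<in> J \<Longrightarrow> f j \<in> Vsp N n) \<Longrightarrow> (\<lambda>i. \<Sum>j\<in>J. f j i) \<in> Vsp N n"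
  using Hsp_sum[of J f N n] by (simp add: Vsp_def hinner_sum_right)

lemma Vsp_Mn_Pl: "v \<in> Vsp N n \<Longrightarrow> v Mn = 0 \<and> v Pl = 0"
  using hinner_ket[of Mn N n v] hinner_ket[of Pl N n v] by (simp add: Vsp_def Sset_def)

lemma zero_in_Vk: "(\<lambda>_. 0) \<in> Vk N n k"
  unfolding Vk_def using zero_in_Vsp by (auto intro: image_eqI[of _ _ "\<lambda>_. 0"])

lemma bij_betw_right_inverse:
  assumes "\<And>y. y \<in> B \<Longrightarrow> f (g y) = y"
  shows "bij_betw g B (g ` B)" "bij_betw f (g ` B) B"
  using assms by (auto intro!: bij_betw_byWitness[where f' = f] bij_betw_byWitness[where f' = g])

definition zigzag :: "(nat \<Rightarrow> nat) \<Rightarrow> nat \<Rightarrow> hvec" where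
  "zigzag n m = (if even m then phi n 0 (Suc m) else ket (Bs 0 (Suc m)))"

locale decreasing_dims =
  fixes N :: nat and n :: "nat \<Rightarrow> nat"
  assumes N_ge_2: "N \<ge> 2"
    and n_decreasing: "\<And>j. 1 \<le> j \<Longrightarrow> j < N \<Longrightarrow> n (Suc j) \<le> n j"
    and n_N_pos: "n N \<ge> 1"
begin

lemma n_pos:
  assumes "1 \<le> k" "k \<le> N"
  shows "0 < n k"
  using assms(2)
proof (induction rule: inc_induct)
  case base
  then show ?case using n_N_pos by simp
next
  case (step m)
  then show ?case using n_decreasing[of m] assms(1) by simp
qed

lemma Zop_adj_Zop:
  assumes x: "x \<in> Esp N n (Suc k)" and k: "1 \<le> k" "Suc k \<le> N"
  shows "mapply N n (Zop N n) (mapply N n (adj (Zop N n)) x) = x"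
proof -
  have "mapply N n (adj (Zop N n)) x = mapply N n (adj (Zk n k)) x"
    using adj_Zop_Esp[OF x] k by simp
  moreover have "mapply N n (Zop N n) (mapply N n (adj (Zk n k)) x) =
      mapply N n (Zk n k) (mapply N n (adj (Zk n k)) x)"
    using Zop_Esp[OF adj_Zk_in_Esp[OF k]] k by simp
  moreover have "mapply N n (Zk n k) (mapply N n (adj (Zk n k)) x) = x"
    using Zk_adj_Zk[OF k] n_pos n_decreasing k x by (simp add: Esp_def)
  ultimately show ?thesis by simp
qed

lemma zigzag_in_Esp: "m \<le> N - 1 \<Longrightarrow> zigzag n m \<in> Esp N n (Suc m)"
  unfolding zigzag_def using phi0_in_Esp ket0_in_Esp n_pos N_ge_2 by auto

lemma Zpow_phi0:
  assumes "m \<le> N - 1"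
  shows "\<exists>c. c \<noteq> 0 \<and> Zpow N n m (phi n 0 1) = (\<lambda>i. c * zigzag n m i)"
  using assms
proof (induction m)
  case 0
  show ?case by (intro exI[of _ 1]) (simp add: Zpow_def zigzag_def)
next
  case (Suc m)
  then obtain c where c: "c \<noteq> 0" "Zpow N n m (phi n 0 1) = (\<lambda>i. c * zigzag n m i)" by auto
  have m: "1 \<le> Suc m" "Suc (Suc m) \<le> N" using Suc.prems N_ge_2 by auto
  have n: "0 < n (Suc m)" "0 < n (Suc (Suc m))" "n (Suc (Suc m)) \<le> n (Suc m)"
    using n_pos n_decreasing m by auto
  have "mapply N n (Zop N n) (zigzag n m) = mapply N n (Zk n (Suc m)) (zigzag n m)"
    using Zop_Esp[OF zigzag_in_Esp] Suc.prems m by simp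
  then have Zpow_Suc_m: "Zpow N n (Suc m) (phi n 0 1) = (\<lambda>i. c * mapply N n (Zk n (Suc m)) (zigzag n m) i)"
    unfolding Zpow_Suc c(2) mapply_scale by simp
  show ?case
  proof (cases "even m")
    case True
    then have "mapply N n (Zk n (Suc m)) (zigzag n m) = zigzag n (Suc m)"
      using Zk_phi0[OF m n(2,3)] by (simp add: zigzag_def)
    then show ?thesis using c(1) Zpow_Suc_m by auto
  next
    case False
    define c' where "c' = inv_sqrt n (Suc m) / inv_sqrt n (Suc (Suc m))"
    have "c' \<noteq> 0" using inv_sqrt_nonzero n by (simp add: c'_def)
    moreover have "mapply N n (Zk n (Suc m)) (zigzag n m) = (\<lambda>i. c' * zigzag n (Suc m) i)"
      using Zk_ket0[OF m n(1,2)] False by (simp add: zigzag_def c'_def)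
    ultimately show ?thesis
      using c(1) Zpow_Suc_m by (intro exI[of _ "c * c'"]) (auto simp: mult.assoc)
  qed
qed

lemma Zpow_phi0_in_Esp: "m \<le> N - 1 \<Longrightarrow> Zpow N n m (phi n 0 1) \<in> Esp N n (Suc m)"
  using Zpow_phi0 zigzag_in_Esp Esp_scale by metis

lemma zigzag_in_Vperp: "m \<le> N - 1 \<Longrightarrow> zigzag n m \<in> Vperp N n"
proof -
  assume m: "m \<le> N - 1"
  then obtain c where "c \<noteq> 0" "Zpow N n m (phi n 0 1) = (\<lambda>i. c * zigzag n m i)"
    using Zpow_phi0 by blast
  moreover have "Zpow N n m (phi n 0 1) \<in> Vperp N n"
    using m Sset_subset_Vperp Zpow_phi0_in_Sset by blast
  ultimately show ?thesis using Vperp_scale_cancel by metis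
qed

lemma adj_Zop_zigzag_in_Vperp:
  assumes m: "m \<le> N - 1"
  shows "mapply N n (adj (Zop N n)) (zigzag n m) \<in> Vperp N n"
proof (cases "even m")
  case False
  then obtain m' where m': "m = Suc m'" "even m'" by (cases m) auto
  have k: "1 \<le> m" "Suc m \<le> N" using odd_pos[OF False] m N_ge_2 by auto
  have "mapply N n (adj (Zop N n)) (zigzag n m) = mapply N n (adj (Zk n m)) (ket (Bs 0 (Suc m)))"
    using adj_Zop_Esp[OF zigzag_in_Esp[OF m]] k False by (simp add: zigzag_def)
  also have "\<dots> = zigzag n m'"
    using adj_Zk_ket0[OF k] n_pos k m' by (simp add: zigzag_def)
  finally show ?thesis using zigzag_in_Vperp m m' by simp
next
  case True
  show ?thesis
  proof (cases "m = 0")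
    case True
    then show ?thesis using adj_Zop_Esp[OF zigzag_in_Esp[OF m]] by simp
  next
    case False
    then obtain m' where m': "m = 2 * m'" "1 \<le> m'" using \<open>even m\<close> by auto
    have "mapply N n (adj (Zop N n)) (zigzag n m) = Zadjpow N n 1 (phi n 0 (2 * m' + 1))"
      using \<open>even m\<close> m' by (simp add: zigzag_def Zadjpow_def)
    also have "\<dots> \<in> Sset N n" using m m' by (intro Zadjpow_phi0_odd_in_Sset) auto
    finally show ?thesis using Sset_subset_Vperp by blast
  qed
qed

lemma adj_Zop_Sset_in_Vperp:
  assumes "s \<in> Sset N n"
  shows "mapply N n (adj (Zop N n)) s \<in> Vperp N n"
  using assms
proof (cases rule: Sset_cases)
  case (3 m)
  then obtain c where "s = (\<lambda>i. c * zigzag n m i)" using Zpow_phi0 by blast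
  then show ?thesis using adj_Zop_zigzag_in_Vperp[OF 3(1)] by (simp add: mapply_scale Vperp_scale)
next
  case (4 m)
  show ?thesis
  proof (cases "Suc m = N")
    case True
    then show ?thesis using Zadjpow_phi0_vanish[of N N n] N_ge_2 4 by (simp flip: Zadjpow_Suc)
  next
    case False
    then have "Zadjpow N n (Suc m) (phi n 0 N) \<in> Sset N n"
      using 4 N_ge_2 by (intro Zadjpow_phi0_top_in_Sset) auto
    then show ?thesis using 4 Sset_subset_Vperp by (auto simp: Zadjpow_Suc)
  qed
next
  case (5 m t)
  show ?thesis
  proof (cases "t = 2 * m")
    case True
    then show ?thesis using Zadjpow_phi0_vanish[of "2 * m + 1" N n] 5 by (simp flip: Zadjpow_Suc)
  next
    case False
    then have "Zadjpow N n (Suc t) (phi n 0 (2 * m + 1)) \<in> Sset N n"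
      using 5 by (intro Zadjpow_phi0_odd_in_Sset) auto
    then show ?thesis using 5 Sset_subset_Vperp by (auto simp: Zadjpow_Suc)
  qed
qed (simp_all add: Zop_ket_Mn_Pl)

lemma Zop_Zadjpow_phi0:
  assumes "p \<le> N" "Suc t < p"
  shows "mapply N n (Zop N n) (Zadjpow N n (Suc t) (phi n 0 p)) = Zadjpow N n t (phi n 0 p)"
proof -
  have "Zadjpow N n t (phi n 0 p) \<in> Esp N n (Suc (p - Suc t))"
    using Zadjpow_phi0_in_Esp[of p N t n] assms by (simp add: Suc_diff_Suc)
  moreover have "1 \<le> p - Suc t" "Suc (p - Suc t) \<le> N" using assms by auto
  ultimately show ?thesis by (simp add: Zadjpow_Suc Zop_adj_Zop)
qed

lemma Zpow_Suc_phi0_in_Vperp: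
  assumes m: "m \<le> N - 1"
  shows "Zpow N n (Suc m) (phi n 0 1) \<in> Vperp N n"
proof (cases "Suc m = N")
  case True
  then show ?thesis using Zpow_Esp_vanish[OF phi0_in_Esp] N_ge_2 by simp
next
  case False
  then have "Zpow N n (Suc m) (phi n 0 1) \<in> Sset N n"
    using m N_ge_2 by (intro Zpow_phi0_in_Sset) auto
  then show ?thesis using Sset_subset_Vperp by auto
qed

lemma Zop_Sset_in_Vperp:
  assumes "s \<in> Sset N n"
  shows "mapply N n (Zop N n) s \<in> Vperp N n"
  using assms
proof (cases rule: Sset_cases)
  case (3 m)
  then show ?thesis using Zpow_Suc_phi0_in_Vperp by (simp add: Zpow_Suc)
next
  case (4 m)
  show ?thesis
  proof (cases m)
    case 0
    then show ?thesis using 4 Zop_Esp[OF phi0_in_Esp, of N N n] N_ge_2 by (simp add: Zadjpow_def)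
  next
    case (Suc m')
    then have "mapply N n (Zop N n) s = Zadjpow N n m' (phi n 0 N)"
      using 4 Zop_Zadjpow_phi0 by simp
    moreover have "Zadjpow N n m' (phi n 0 N) \<in> Sset N n"
      using 4 Suc by (intro Zadjpow_phi0_top_in_Sset) auto
    ultimately show ?thesis using Sset_subset_Vperp by auto
  qed
next
  case (5 m t)
  then obtain t' where t': "t = Suc t'" by (cases t) auto
  then have "mapply N n (Zop N n) s = Zadjpow N n t' (phi n 0 (2 * m + 1))"
    using 5 Zop_Zadjpow_phi0 by simp
  moreover have "Zadjpow N n t' (phi n 0 (2 * m + 1)) \<in> Vperp N n"
  proof (cases "t' = 0")
    case True
    then show ?thesis using zigzag_in_Vperp[of "2 * m"] 5 by (simp add: zigzag_def Zadjpow_def)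
  next
    case False
    then have "Zadjpow N n t' (phi n 0 (2 * m + 1)) \<in> Sset N n"
      using 5 t' by (intro Zadjpow_phi0_odd_in_Sset) auto
    then show ?thesis using Sset_subset_Vperp by auto
  qed
  ultimately show ?thesis by simp
qed (simp_all add: Zop_ket_Mn_Pl)

lemma Zop_Vsp: "x \<in> Vsp N n \<Longrightarrow> mapply N n (Zop N n) x \<in> Vsp N n"
  using Zop_Hsp adj_Zop_Sset_in_Vperp
  by (auto simp: Vsp_def Vperp_def hinner_mapply_right)

lemma adj_Zop_Vsp: "x \<in> Vsp N n \<Longrightarrow> mapply N n (adj (Zop N n)) x \<in> Vsp N n"
  using adj_Zop_Hsp Zop_Sset_in_Vperp
  by (auto simp: Vsp_def Vperp_def hinner_mapply_right)

lemma Sset_Proj_in_Vperp: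
  assumes s: "s \<in> Sset N n"
  shows "Proj k s \<in> Vperp N n"
proof -
  consider "s = ket Mn" | "s = ket Pl" | d where "s \<in> Esp N n d"
    using s
  proof (cases rule: Sset_cases)
    case (3 m)
    then show ?thesis using Zpow_phi0_in_Esp that(3) by blast
  next
    case (4 m)
    then show ?thesis using Zadjpow_phi0_in_Esp[of N N m n] N_ge_2 by (intro that(3)[of "N - m"]) auto
  next
    case (5 m t)
    then show ?thesis
      using Zadjpow_phi0_in_Esp[of "2 * m + 1" N t n] by (intro that(3)[of "2 * m + 1 - t"]) auto
  qed (use that in simp_all)
  then show ?thesis
  proof cases
    case (3 d)
    then have "Proj d s = s" by (simp add: Esp_def)
    then have "Proj k s = (if d = k then s else (\<lambda>_. 0))"
      using Proj_Proj[of k d s] by (cases "d = k") auto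
    then show ?thesis using s Sset_subset_Vperp by auto
  qed simp_all
qed

lemma Proj_Vsp: "v \<in> Vsp N n \<Longrightarrow> Proj k v \<in> Vsp N n"
  using Proj_Hsp Sset_Proj_in_Vperp by (auto simp: Vsp_def Vperp_def hinner_Proj[symmetric])

lemma Vk_eq_Int_Esp: "Vk N n k = Vsp N n \<inter> Esp N n k"
proof
  show "Vk N n k \<subseteq> Vsp N n \<inter> Esp N n k"
    unfolding Vk_def Esp_def using Proj_Vsp by (auto simp: Proj_Proj Vsp_def)
  show "Vsp N n \<inter> Esp N n k \<subseteq> Vk N n k"
  proof
    fix x assume "x \<in> Vsp N n \<inter> Esp N n k"
    then show "x \<in> Vk N n k"
      unfolding Vk_def by (intro image_eqI[of x "Proj k" x]) (auto simp: Esp_def)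
  qed
qed

lemma Zk_Vk:
  assumes k: "1 \<le> k" "k < N" and x: "x \<in> Vk N n k"
  shows "mapply N n (Zk n k) x \<in> Vk N n (Suc k)"
proof -
  have "mapply N n (Zk n k) x = mapply N n (Zop N n) x"
    using Zop_Esp[of x N n k] x k by (simp add: Vk_eq_Int_Esp)
  moreover have "mapply N n (Zk n k) x \<in> Esp N n (Suc k)" using Zk_in_Esp k by simp
  ultimately show ?thesis using Zop_Vsp x by (simp add: Vk_eq_Int_Esp)
qed

lemma adj_Zk_Vk:
  assumes k: "1 \<le> k" "k < N" and y: "y \<in> Vk N n (Suc k)"
  shows "mapply N n (adj (Zk n k)) y \<in> Vk N n k"
proof -
  have "mapply N n (adj (Zk n k)) y = mapply N n (adj (Zop N n)) y"
    using adj_Zop_Esp[of y N n "Suc k"] y k by (simp add: Vk_eq_Int_Esp)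
  moreover have "mapply N n (adj (Zk n k)) y \<in> Esp N n k" using adj_Zk_in_Esp k by simp
  ultimately show ?thesis using adj_Zop_Vsp y by (simp add: Vk_eq_Int_Esp)
qed

lemma Zk_adj_Zk_Vk:
  assumes k: "1 \<le> k" "k < N" and y: "y \<in> Vk N n (Suc k)"
  shows "mapply N n (Zk n k) (mapply N n (adj (Zk n k)) y) = y"
  using Zk_adj_Zk[of k N n y] n_pos n_decreasing k y by (simp add: Vk_eq_Int_Esp Esp_def)

lemma Zk_image_Vk:
  assumes "1 \<le> k" "k < N"
  shows "mapply N n (Zk n k) ` Vk N n k = Vk N n (Suc k)"
  using Zk_Vk[OF assms] adj_Zk_Vk[OF assms] Zk_adj_Zk_Vk[OF assms] by (auto intro: image_eqI[OF sym])

lemma Zpow_image_Vk: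
  assumes "1 \<le> k" "k + j \<le> N"
  shows "Zpow N n j ` Vk N n k = Vk N n (k + j)"
  using assms(2)
proof (induction j)
  case 0
  then show ?case by (simp add: Zpow_def)
next
  case (Suc j)
  have "Zpow N n (Suc j) ` Vk N n k = mapply N n (Zop N n) ` (Zpow N n j ` Vk N n k)"
    by (simp add: Zpow_Suc image_image)
  also have "\<dots> = mapply N n (Zop N n) ` Vk N n (k + j)"
    using Suc by simp
  also have "\<dots> = mapply N n (Zk n (k + j)) ` Vk N n (k + j)"
    using Zop_Esp Suc.prems assms(1) by (intro image_cong refl) (auto simp: Vk_eq_Int_Esp)
  also have "\<dots> = Vk N n (k + Suc j)"
    using Zk_image_Vk Suc.prems assms(1) by simp
  finally show ?case .
qed

lemma Vsp_eq_sumset: "Vsp N n = sumset (Vk N n) {1..N}"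
proof
  show "Vsp N n \<subseteq> sumset (Vk N n) {1..N}"
  proof
    fix v assume v: "v \<in> Vsp N n"
    have v_eq: "v = (\<lambda>i. \<Sum>j\<in>{1..N}. Proj j v i)"
      by (rule Hsp_eq_sum_Proj) (use v Vsp_Mn_Pl[OF v] in \<open>auto simp: Vsp_def\<close>)
    have "(\<lambda>i. \<Sum>j\<in>{1..N}. Proj j v i) \<in> sumset (Vk N n) {1..N}"
      using v by (intro sumsetI) (simp add: Vk_def)
    then show "v \<in> sumset (Vk N n) {1..N}"
      unfolding v_eq[symmetric] .
  qed
  show "sumset (Vk N n) {1..N} \<subseteq> Vsp N n"
    unfolding sumset_def by (auto simp: Vk_eq_Int_Esp intro!: Vsp_sum)
qed

lemma Zpow_Vsp_direct_sum:
  assumes k: "1 \<le> k" "k < N"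
  shows "is_direct_sum (Zpow N n k ` Vsp N n) (Vk N n) {k+1..N}"
proof (rule is_direct_sum_levels[where lv = id])
  have "Zpow N n k ` Vsp N n = sumset (\<lambda>j. Zpow N n k ` Vk N n j) {1..N}"
    unfolding Vsp_eq_sumset by (rule sumset_image) (rule Zpow_sum)
  also have "\<dots> = sumset (\<lambda>j. Zpow N n k ` Vk N n j) {1..N-k}"
  proof (rule sumset_mono_neutral)
    fix j assume j: "j \<in> {1..N} - {1..N-k}"
    have "Zpow N n k x = (\<lambda>_. 0)" if "x \<in> Vk N n j" for x
      using j that by (intro Zpow_Esp_vanish[of x N n j]) (auto simp: Vk_eq_Int_Esp)
    moreover have "(\<lambda>_. 0) \<in> Zpow N n k ` Vk N n j"
      by (rule image_eqI[where x = "\<lambda>_. 0"]) (simp_all add: Zpow_zero zero_in_Vk)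
    ultimately show "Zpow N n k ` Vk N n j = {\<lambda>_. 0}" by auto
  qed auto
  also have "\<dots> = sumset (\<lambda>j. Vk N n (j + k)) {1..N-k}"
  proof (rule sumset_cong)
    fix j assume "j \<in> {1..N-k}"
    then have "1 \<le> j" "j + k \<le> N" using k by auto
    then show "Zpow N n k ` Vk N n j = Vk N n (j + k)" by (rule Zpow_image_Vk)
  qed
  also have "\<dots> = sumset (Vk N n) ((\<lambda>j. j + k) ` {1..N-k})"
    by (rule sumset_reindex[symmetric]) (simp add: inj_on_def)
  also have "(\<lambda>j. j + k) ` {1..N-k} = {k+1..N}" using k by simp
  finally show "Zpow N n k ` Vsp N n = sumset (Vk N n) {k+1..N}" .
qed (auto simp: Vk_eq_Int_Esp Esp_def)

lemma Vsp_direct_sum_Zpow: "is_direct_sum (Vsp N n) (\<lambda>j. Zpow N n j ` Vk N n 1) {0..N-1}"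
proof (rule is_direct_sum_levels[where lv = Suc])
  have img: "Zpow N n j ` Vk N n 1 = Vk N n (Suc j)" if "j \<in> {0..N-1}" for j
    using Zpow_image_Vk[of 1 j] that N_ge_2 by simp
  have "{1..N} = Suc ` {0..N-1}" using N_ge_2 by simp
  then have "Vsp N n = sumset (Vk N n) (Suc ` {0..N-1})"
    by (simp only: Vsp_eq_sumset)
  also have "\<dots> = sumset (\<lambda>j. Vk N n (Suc j)) {0..N-1}"
    by (rule sumset_reindex) simp
  also have "\<dots> = sumset (\<lambda>j. Zpow N n j ` Vk N n 1) {0..N-1}"
    using img by (intro sumset_cong) simp
  finally show "Vsp N n = sumset (\<lambda>j. Zpow N n j ` Vk N n 1) {0..N-1}" .
  show "\<And>j x. j \<in> {0..N-1} \<Longrightarrow> x \<in> Zpow N n j ` Vk N n 1 \<Longrightarrow> Proj (Suc j) x = x"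
    using img by (auto simp: Vk_eq_Int_Esp Esp_def)
qed auto

lemma absZ_image_Vsp:
  assumes k: "1 \<le> k" "k < N"
  shows "mapply N n (absZ N n k) ` Vsp N n = mapply N n (adj (Zk n k)) ` Vk N n (Suc k)"
proof -
  have "mapply N n (Zk n k) ` Vsp N n = mapply N n (Zk n k) ` Vk N n k"
  proof
    show "mapply N n (Zk n k) ` Vsp N n \<subseteq> mapply N n (Zk n k) ` Vk N n k"
    proof
      fix y assume "y \<in> mapply N n (Zk n k) ` Vsp N n"
      then obtain v where v: "v \<in> Vsp N n" "y = mapply N n (Zk n k) v" by blast
      then have "y = mapply N n (Zk n k) (Proj k v)" using Zk_Proj[of k N n k v] k by simp
      moreover have "Proj k v \<in> Vk N n k" using v by (simp add: Vk_def)
      ultimately show "y \<in> mapply N n (Zk n k) ` Vk N n k" by blast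
    qed
    show "mapply N n (Zk n k) ` Vk N n k \<subseteq> mapply N n (Zk n k) ` Vsp N n"
      by (auto simp: Vk_eq_Int_Esp)
  qed
  also have "\<dots> = Vk N n (Suc k)" by (rule Zk_image_Vk[OF k])
  moreover have "mapply N n (absZ N n k) ` Vsp N n =
      mapply N n (adj (Zk n k)) ` mapply N n (Zk n k) ` Vsp N n"
    by (simp add: absZ_def mapply_mmult image_image)
  ultimately show ?thesis by simp
qed

lemma hnorm_adj_Zk:
  assumes k: "1 \<le> k" "k < N" and y: "y \<in> Vk N n (Suc k)"
  shows "hnorm N n (mapply N n (adj (Zk n k)) y) = hnorm N n y"
proof -
  have "hinner N n (mapply N n (adj (Zk n k)) y) (mapply N n (adj (Zk n k)) y)
      = hinner N n y (mapply N n (Zk n k) (mapply N n (adj (Zk n k)) y))"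
    using hinner_mapply_left[of N n "adj (Zk n k)" y] by simp
  also have "\<dots> = hinner N n y y" using Zk_adj_Zk_Vk[OF k y] by simp
  finally show ?thesis by (simp add: hnorm_def)
qed

end

theorem lemma3p13:
  fixes N :: nat and n :: "nat \<Rightarrow> nat" and k :: nat
  assumes hN: "N \<ge> 2"
    and hmono: "\<And>j. 1 \<le> j \<Longrightarrow> j < N \<Longrightarrow> n (Suc j) \<le> n j"
    and hpos: "n N \<ge> 1"
    and hk: "1 \<le> k" "k \<le> N - 1"
  shows "(\<forall>j\<in>{1..N-k-1}. Zpow N n j ` Vk N n k = Vk N n (k + j))
       \<and> is_direct_sum (Zpow N n k ` Vsp N n) (\<lambda>j. Vk N n j) {k+1..N}
       \<and> is_direct_sum (Vsp N n) (\<lambda>j. Zpow N n j ` Vk N n 1) {0..N-1}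
       \<and> bij_betw (mapply N n (Zk n k)) (mapply N n (absZ N n k) ` Vsp N n) (Vk N n (k + 1))
       \<and> (\<forall>x\<in>mapply N n (absZ N n k) ` Vsp N n. hnorm N n (mapply N n (Zk n k) x) = hnorm N n x)
       \<and> bij_betw (mapply N n (adj (Zk n k))) (Vk N n (k + 1)) (mapply N n (absZ N n k) ` Vsp N n)
       \<and> (\<forall>x\<in>Vk N n (k + 1). hnorm N n (mapply N n (adj (Zk n k)) x) = hnorm N n x)"
proof -
  interpret decreasing_dims N n
    using hN hmono hpos by unfold_locales
  have k: "1 \<le> k" "k < N" using hk hN by auto
  let ?Zk = "mapply N n (Zk n k)" and ?Zk_adj = "mapply N n (adj (Zk n k))"
  have inverse: "\<And>y. y \<in> Vk N n (Suc k) \<Longrightarrow> ?Zk (?Zk_adj y) = y"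
    using Zk_adj_Zk_Vk[OF k] .
  have "\<forall>j\<in>{1..N-k-1}. Zpow N n j ` Vk N n k = Vk N n (k + j)"
  proof
    fix j assume "j \<in> {1..N-k-1}"
    then have "k + j \<le> N" by auto
    then show "Zpow N n j ` Vk N n k = Vk N n (k + j)" by (rule Zpow_image_Vk[OF k(1)])
  qed
  moreover have "\<forall>x\<in>?Zk_adj ` Vk N n (Suc k). hnorm N n (?Zk x) = hnorm N n x"
    using inverse hnorm_adj_Zk[OF k] by auto
  ultimately show ?thesis
    using Zpow_Vsp_direct_sum[OF k] Vsp_direct_sum_Zpow bij_betw_right_inverse[where f = ?Zk and g = ?Zk_adj, OF inverse]
      hnorm_adj_Zk[OF k]
    by (simp add: absZ_image_Vsp[OF k])
qed

end
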